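(* In the interpolating system described in the context, for every $t\in[0,1]$ and $u\ge0$, the distributions $\mathbb P_{m_1}(x)=\mathbb E\langle\delta(x-m_1)\rangle_{t,u}$ and $\mathbb P_{q_{12}}(x)=\mathbb E\langle\delta(x-q_{12})\rangle_{t,u}$ are equal. In particular $\mathbb E\langle m_1\rangle_{t,u}=\mathbb E\langle q_{12}\rangle_{t,u}$.
   Context: Let $K,N$ with $K/N=\beta$, $B(t),\lambda(t)\ge0$ for $t\in[0,1]$. Random data: $n\in\mathbb R^N$, $w,h\in\mathbb R^K$ with i.i.d. $\mathcal N(0,1)$ entries, $N\times K$ matrix $s$ with i.i.d. $\mathcal N(0,1)$ entries, all independent; $\mathbb E$ is expectation over them. For $x\in\{\pm1\}^K$, $z=\mathbf 1-x$ and $h_u(x)=\sqrt u\sum_kh_kx_k+u\sum_kx_k-\sqrt u\sum_k|h_k|$. Gibbs measure $p_{t,u}(x)\propto\exp\bigl(-\frac12\|n+N^{-1/2}B(t)^{1/2}sz\|^2-\frac12\|w+\lambda(t)^{1/2}z\|^2+h_u(x)\bigr)$ on $\{\pm1\}^K$. $\langle\cdot\rangle_{t,u}$ denotes average under $p_{t,u}$, and for functions of two configurations $x^{(1)},x^{(2)}$ ("replicas") it denotes average under the product measure $p_{t,u}(x^{(1)})p_{t,u}(x^{(2)})$ (same realization of $n,w,h,s$). $m_1=\frac1K\sum_k x_k$, $q_{12}=\frac1K\sum_k x^{(1)}_kx^{(2)}_k$. *)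

theory Defs
  imports "HOL-Probability.Probability"
begin

text \<open>Indices of the Gaussian random data: n_i (i<N), w_k, h_k (k<K), s_ik (i<N, k<K).\<close>
datatype gidx = Nn nat | Ww nat | Hh nat | Ss nat nat

definition gidx_set :: "nat \<Rightarrow> nat \<Rightarrow> gidx set" where
  "gidx_set K N = Nn ` {..<N} \<union> Ww ` {..<K} \<union> Hh ` {..<K} \<union> (\<lambda>(i,k). Ss i k) ` ({..<N} \<times> {..<K})"

definition data_space :: "nat \<Rightarrow> nat \<Rightarrow> (gidx \<Rightarrow> real) measure" where
  "data_space K N = PiM (gidx_set K N) (\<lambda>_. density lborel std_normal_density)"

definition spins :: "nat \<Rightarrow> (nat \<Rightarrow> real) set" where
  "spins K = PiE {..<K} (\<lambda>_. {-1, 1})"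

definition h_u :: "nat \<Rightarrow> real \<Rightarrow> (gidx \<Rightarrow> real) \<Rightarrow> (nat \<Rightarrow> real) \<Rightarrow> real" where
  "h_u K u \<omega> x = sqrt u * (\<Sum>k<K. \<omega> (Hh k) * x k) + u * (\<Sum>k<K. x k)
      - sqrt u * (\<Sum>k<K. \<bar>\<omega> (Hh k)\<bar>)"

text \<open>Exponent of the (unnormalized) Gibbs weight, with z = 1 - x.\<close>
definition hamil :: "nat \<Rightarrow> nat \<Rightarrow> (real \<Rightarrow> real) \<Rightarrow> (real \<Rightarrow> real) \<Rightarrow> real \<Rightarrow> real
    \<Rightarrow> (gidx \<Rightarrow> real) \<Rightarrow> (nat \<Rightarrow> real) \<Rightarrow> real" where
  "hamil K N B lam t u \<omega> x =
     - (1/2) * (\<Sum>i<N. (\<omega> (Nn i) + sqrt (B t) / sqrt (real N) * (\<Sum>k<K. \<omega> (Ss i k) * (1 - x k)))\<^sup>2)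
     - (1/2) * (\<Sum>k<K. (\<omega> (Ww k) + sqrt (lam t) * (1 - x k))\<^sup>2)
     + h_u K u \<omega> x"

definition gibbs_weight where
  "gibbs_weight K N B lam t u \<omega> x = exp (hamil K N B lam t u \<omega> x)"

definition partition_fn where
  "partition_fn K N B lam t u \<omega> = (\<Sum>x\<in>spins K. gibbs_weight K N B lam t u \<omega> x)"

definition gibbs_avg1 :: "nat \<Rightarrow> nat \<Rightarrow> (real \<Rightarrow> real) \<Rightarrow> (real \<Rightarrow> real) \<Rightarrow> real \<Rightarrow> real
    \<Rightarrow> (gidx \<Rightarrow> real) \<Rightarrow> ((nat \<Rightarrow> real) \<Rightarrow> real) \<Rightarrow> real" where
  "gibbs_avg1 K N B lam t u \<omega> f =
     (\<Sum>x\<in>spins K. gibbs_weight K N B lam t u \<omega> x * f x) / partition_fn K N B lam t u \<omega>"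

definition gibbs_avg2 :: "nat \<Rightarrow> nat \<Rightarrow> (real \<Rightarrow> real) \<Rightarrow> (real \<Rightarrow> real) \<Rightarrow> real \<Rightarrow> real
    \<Rightarrow> (gidx \<Rightarrow> real) \<Rightarrow> ((nat \<Rightarrow> real) \<Rightarrow> (nat \<Rightarrow> real) \<Rightarrow> real) \<Rightarrow> real" where
  "gibbs_avg2 K N B lam t u \<omega> f =
     (\<Sum>x1\<in>spins K. \<Sum>x2\<in>spins K.
        gibbs_weight K N B lam t u \<omega> x1 * gibbs_weight K N B lam t u \<omega> x2 * f x1 x2)
     / (partition_fn K N B lam t u \<omega>)\<^sup>2"

definition magn :: "nat \<Rightarrow> (nat \<Rightarrow> real) \<Rightarrow> real" where
  "magn K x = (1 / real K) * (\<Sum>k<K. x k)"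

definition overlap :: "nat \<Rightarrow> (nat \<Rightarrow> real) \<Rightarrow> (nat \<Rightarrow> real) \<Rightarrow> real" where
  "overlap K x1 x2 = (1 / real K) * (\<Sum>k<K. x1 k * x2 k)"

end

theory Submission
  imports Defs
begin

text \<open>
  The data are pure noise: they are the observations of the configuration \<open>x = 1\<close> planted in
  the model. For \<open>\<tau> \<in> {\<plusminus>1}\<^sup>K\<close>, an affine change \<open>G\<^sub>\<tau>\<close> of the data (reflecting and shifting
  \<open>w, h, s\<close>, then shearing \<open>n\<close>) makes \<open>H(G\<^sub>\<tau> \<omega>, \<tau>x) - H(\<omega>, x)\<close> independent of \<open>x\<close>, so the
  Gibbs average of \<open>f\<close> at \<open>G\<^sub>\<tau> \<omega>\<close> is that of \<open>f(\<tau> \<cdot>)\<close> at \<open>\<omega>\<close>. By the Gaussian change of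
  variables, the law of \<open>G\<^sub>\<tau> \<omega>\<close> has density \<open>\<rho>\<^sub>\<tau> = w(\<tau>)/w(1)\<close> (a ratio of Gibbs weights) with
  respect to the law of \<open>\<omega>\<close>: \<open>G\<^sub>\<tau> \<omega>\<close> is the data with \<open>\<tau>\<close> planted instead of \<open>1\<close>. Hence, for
  every \<open>\<tau>\<close>, \<open>\<bbbE>\<langle>g(x)\<rangle> = \<bbbE>[\<rho>\<^sub>\<tau> \<langle>g(x\<tau>)\<rangle>]\<close> and \<open>\<bbbE>\<langle>g(xy)\<rangle> = \<bbbE>[\<rho>\<^sub>\<tau> \<langle>g(xy)\<rangle>]\<close> (two replicas
  \<open>x, y\<close>). Summed over \<open>\<tau>\<close>, the right-hand sides agree pointwise, because \<open>\<Sum>\<^sub>\<tau> w(\<tau>) = Z\<close>.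
  Finally \<open>m\<^sub>1(xy) = q\<^sub>1\<^sub>2(x, y)\<close>.
\<close>

abbreviation std_normal :: "real measure" where
  "std_normal \<equiv> density lborel std_normal_density"

text \<open>Density of \<open>N(a,1)\<close> with respect to \<open>N(0,1)\<close>.\<close>
definition normal_shift_density :: "real \<Rightarrow> real \<Rightarrow> real" where
  "normal_shift_density a y = exp (a * y - a\<^sup>2 / 2)"

lemma normal_shift_density_nonneg: "0 \<le> normal_shift_density a y"
  by (simp add: normal_shift_density_def)

lemma borel_measurable_normal_shift_density[measurable]:
  "normal_shift_density a \<in> borel_measurable borel"
  unfolding normal_shift_density_def by measurable

lemma measurable_std_normal_eq[simp]:
  "measurable M std_normal = measurable M borel" "measurable std_normal M' = measurable borel M'"
  by (rule measurable_cong_sets; simp)+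

lemma prob_space_std_normal: "prob_space std_normal"
  by (rule prob_space_normal_density) simp

lemma product_prob_space_std_normal: "product_prob_space (\<lambda>_. std_normal)"
  by (intro product_prob_spaceI prob_space_std_normal)

lemma measurable_component_std_normal:
  "i \<in> I \<Longrightarrow> (\<lambda>\<omega>. \<omega> i) \<in> borel_measurable (PiM I (\<lambda>_. std_normal))"
  using measurable_component_singleton[of i I "\<lambda>_. std_normal"] by simp

lemma std_normal_density_affine_shift:
  assumes "b * b = 1"
  shows "std_normal_density (a + b * x) * normal_shift_density a (a + b * x) = std_normal_density x"
proof -
  have "- (a + b * x)\<^sup>2 / 2 + (a * (a + b * x) - a\<^sup>2 / 2) = - x\<^sup>2 / 2"
    using assms by (simp add: power2_eq_square field_simps)
  then show ?thesis unfolding std_normal_density_def normal_shift_density_def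
    by (simp add: exp_add[symmetric] mult.assoc)
qed

lemma distr_std_normal_affine:
  assumes b: "b = 1 \<or> b = -1"
  shows "distr std_normal std_normal (\<lambda>y. a + b * y)
       = density std_normal (\<lambda>y. ennreal (normal_shift_density a y))"
proof (rule measure_eqI)
  fix A assume "A \<in> sets (distr std_normal std_normal (\<lambda>y. a + b * y))"
  then have [measurable]: "A \<in> sets borel" by simp
  have bb: "b * b = 1" using b by auto
  have "emeasure (distr std_normal std_normal (\<lambda>y. a + b * y)) A
      = (\<integral>\<^sup>+ y. indicator A (a + b * y) \<partial>std_normal)"
  proof -
    have "emeasure (distr std_normal std_normal (\<lambda>y. a + b * y)) A
        = (\<integral>\<^sup>+ y. indicator A y \<partial>distr std_normal std_normal (\<lambda>y. a + b * y))"
      by (rule nn_integral_indicator[symmetric]) simp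
    also have "\<dots> = (\<integral>\<^sup>+ y. indicator A (a + b * y) \<partial>std_normal)"
      by (rule nn_integral_distr) auto
    finally show ?thesis .
  qed
  also have "\<dots> = (\<integral>\<^sup>+ y. ennreal (std_normal_density y) * indicator A (a + b * y) \<partial>lborel)"
    by (simp add: nn_integral_density)
  also have "\<dots> = (\<integral>\<^sup>+ y. ennreal (std_normal_density (a + b * y))
      * (ennreal (normal_shift_density a (a + b * y)) * indicator A (a + b * y)) \<partial>lborel)"
    by (intro nn_integral_cong)
      (simp add: ennreal_mult'[symmetric] mult.assoc[symmetric] std_normal_density_affine_shift[OF bb])
  also have "\<dots> = (\<integral>\<^sup>+ y. ennreal (std_normal_density y)
      * (ennreal (normal_shift_density a y) * indicator A y) \<partial>lborel)"
    using nn_integral_real_affine[of "\<lambda>y. ennreal (std_normal_density y)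
      * (ennreal (normal_shift_density a y) * indicator A y)" b a] b
    by auto
  also have "\<dots> = emeasure (density std_normal (\<lambda>y. ennreal (normal_shift_density a y))) A"
    by (simp add: emeasure_density nn_integral_density)
  finally show "emeasure (distr std_normal std_normal (\<lambda>y. a + b * y)) A
      = emeasure (density std_normal (\<lambda>y. ennreal (normal_shift_density a y))) A" .
qed simp

lemma prob_space_std_normal_shift:
  "prob_space (density std_normal (\<lambda>y. ennreal (normal_shift_density a y)))"
proof -
  have "prob_space (distr std_normal std_normal (\<lambda>y. a + 1 * y))"
    by (intro prob_space.prob_space_distr prob_space_std_normal) simp
  then show ?thesis using distr_std_normal_affine[of 1 a] by simp
qed

lemma measurable_PiM_std_normal_affine:
  "(\<lambda>\<omega>. \<lambda>i\<in>I. a i + b i * \<omega> i) \<in> PiM I (\<lambda>_. std_normal) \<rightarrow>\<^sub>M PiM I (\<lambda>_. std_normal)"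
  by (rule measurable_restrict) (simp add: measurable_component_std_normal)

lemma distr_PiM_std_normal_affine:
  assumes I: "finite I" and b: "\<And>i. b i = 1 \<or> b i = -1"
  shows "distr (PiM I (\<lambda>_. std_normal)) (PiM I (\<lambda>_. std_normal)) (\<lambda>\<omega>. \<lambda>i\<in>I. a i + b i * \<omega> i)
       = PiM I (\<lambda>i. density std_normal (\<lambda>y. ennreal (normal_shift_density (a i) y)))" (is "?L = ?R")
proof -
  interpret S: product_prob_space "\<lambda>_. std_normal" by (rule product_prob_space_std_normal)
  interpret D: product_prob_space "\<lambda>i. density std_normal (\<lambda>y. ennreal (normal_shift_density (a i) y))"
    by (intro product_prob_spaceI prob_space_std_normal_shift)
  show ?thesis
  proof (rule D.PiM_eqI[OF I])
    show "sets ?L = sets ?R" by (simp only: sets_distr) (intro sets_PiM_cong refl; simp)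
    fix A assume "\<And>i. i \<in> I \<Longrightarrow> A i \<in> sets (density std_normal (\<lambda>y. ennreal (normal_shift_density (a i) y)))"
    then have A: "\<And>i. i \<in> I \<Longrightarrow> A i \<in> sets borel" by auto
    have "emeasure ?L (PiE I A) = emeasure (PiM I (\<lambda>_. std_normal))
        ((\<lambda>\<omega>. \<lambda>i\<in>I. a i + b i * \<omega> i) -` PiE I A \<inter> space (PiM I (\<lambda>_. std_normal)))"
      using A by (intro emeasure_distr measurable_PiM_std_normal_affine) (auto intro!: sets_PiM_I_finite I)
    also have "(\<lambda>\<omega>. \<lambda>i\<in>I. a i + b i * \<omega> i) -` PiE I A \<inter> space (PiM I (\<lambda>_. std_normal))
             = PiE I (\<lambda>i. (\<lambda>y. a i + b i * y) -` A i \<inter> space std_normal)"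
      by (auto simp: space_PiM PiE_def Pi_def extensional_def)
    also have "emeasure (PiM I (\<lambda>_. std_normal)) \<dots>
        = (\<Prod>i\<in>I. emeasure std_normal ((\<lambda>y. a i + b i * y) -` A i \<inter> space std_normal))"
      using A by (intro S.emeasure_PiM I) (auto intro!: measurable_sets_borel[where M=borel])
    also have "\<dots> = (\<Prod>i\<in>I. emeasure (distr std_normal std_normal (\<lambda>y. a i + b i * y)) (A i))"
      using A by (intro prod.cong refl emeasure_distr[symmetric]) auto
    also have "\<dots> = (\<Prod>i\<in>I. emeasure (density std_normal (\<lambda>y. ennreal (normal_shift_density (a i) y))) (A i))"
      by (simp only: distr_std_normal_affine[OF b])
    finally show "emeasure ?L (PiE I A)
        = (\<Prod>i\<in>I. emeasure (density std_normal (\<lambda>y. ennreal (normal_shift_density (a i) y))) (A i))" .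
  qed
qed

lemma density_PiM_std_normal_shift:
  assumes I: "finite I"
  shows "density (PiM I (\<lambda>_. std_normal)) (\<lambda>\<omega>. \<Prod>i\<in>I. ennreal (normal_shift_density (a i) (\<omega> i)))
       = PiM I (\<lambda>i. density std_normal (\<lambda>y. ennreal (normal_shift_density (a i) y)))" (is "?L = ?R")
proof -
  interpret S: product_prob_space "\<lambda>_. std_normal" by (rule product_prob_space_std_normal)
  interpret D: product_prob_space "\<lambda>i. density std_normal (\<lambda>y. ennreal (normal_shift_density (a i) y))"
    by (intro product_prob_spaceI prob_space_std_normal_shift)
  show ?thesis
  proof (rule D.PiM_eqI[OF I])
    show "sets ?L = sets ?R" by (simp only: sets_density) (intro sets_PiM_cong refl; simp)
    fix A assume "\<And>i. i \<in> I \<Longrightarrow> A i \<in> sets (density std_normal (\<lambda>y. ennreal (normal_shift_density (a i) y)))"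
    then have A: "\<And>i. i \<in> I \<Longrightarrow> A i \<in> sets borel" by auto
    have "emeasure ?L (PiE I A) = (\<integral>\<^sup>+\<omega>. (\<Prod>i\<in>I. ennreal (normal_shift_density (a i) (\<omega> i)))
        * indicator (PiE I A) \<omega> \<partial>PiM I (\<lambda>_. std_normal))"
      using A by (subst emeasure_density) (auto intro!: sets_PiM_I_finite I)
    also have "\<dots> = (\<integral>\<^sup>+\<omega>. (\<Prod>i\<in>I. ennreal (normal_shift_density (a i) (\<omega> i)) * indicator (A i) (\<omega> i))
        \<partial>PiM I (\<lambda>_. std_normal))"
    proof (intro nn_integral_cong)
      fix \<omega> assume "\<omega> \<in> space (PiM I (\<lambda>_. std_normal))"
      then have "indicator (PiE I A) \<omega> = (\<Prod>i\<in>I. indicator (A i) (\<omega> i) :: ennreal)"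
        using I by (auto simp: space_PiM indicator_def PiE_def Pi_def prod_zero_iff)
      then show "(\<Prod>i\<in>I. ennreal (normal_shift_density (a i) (\<omega> i))) * indicator (PiE I A) \<omega>
          = (\<Prod>i\<in>I. ennreal (normal_shift_density (a i) (\<omega> i)) * indicator (A i) (\<omega> i))"
        by (simp add: prod.distrib)
    qed
    also have "\<dots> = (\<Prod>i\<in>I. \<integral>\<^sup>+y. ennreal (normal_shift_density (a i) y) * indicator (A i) y \<partial>std_normal)"
      using A by (intro S.product_nn_integral_prod I) auto
    also have "\<dots> = (\<Prod>i\<in>I. emeasure (density std_normal (\<lambda>y. ennreal (normal_shift_density (a i) y))) (A i))"
      using A by (intro prod.cong refl) (simp add: emeasure_density)
    finally show "emeasure ?L (PiE I A)
        = (\<Prod>i\<in>I. emeasure (density std_normal (\<lambda>y. ennreal (normal_shift_density (a i) y))) (A i))" .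
  qed
qed

lemma nn_integral_PiM_std_normal_affine:
  assumes I: "finite I" and b: "\<And>i. b i = 1 \<or> b i = -1"
    and H: "H \<in> borel_measurable (PiM I (\<lambda>_. std_normal))"
  shows "(\<integral>\<^sup>+\<omega>. H (\<lambda>i\<in>I. a i + b i * \<omega> i) \<partial>PiM I (\<lambda>_. std_normal))
       = (\<integral>\<^sup>+\<omega>. (\<Prod>i\<in>I. ennreal (normal_shift_density (a i) (\<omega> i))) * H \<omega> \<partial>PiM I (\<lambda>_. std_normal))"
proof -
  have "(\<integral>\<^sup>+\<omega>. H (\<lambda>i\<in>I. a i + b i * \<omega> i) \<partial>PiM I (\<lambda>_. std_normal))
      = (\<integral>\<^sup>+\<omega>. H \<omega> \<partial>distr (PiM I (\<lambda>_. std_normal)) (PiM I (\<lambda>_. std_normal)) (\<lambda>\<omega>. \<lambda>i\<in>I. a i + b i * \<omega> i))"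
    by (rule nn_integral_distr[symmetric, OF measurable_PiM_std_normal_affine]) (use H in simp)
  also have "\<dots> = (\<integral>\<^sup>+\<omega>. (\<Prod>i\<in>I. ennreal (normal_shift_density (a i) (\<omega> i))) * H \<omega> \<partial>PiM I (\<lambda>_. std_normal))"
    unfolding distr_PiM_std_normal_affine[OF I b] density_PiM_std_normal_shift[OF I, symmetric]
    by (rule nn_integral_density) (use H in simp_all)
  finally show ?thesis .
qed

lemma measurable_PiM_std_normal_shear:
  assumes "\<And>j. j \<in> S \<Longrightarrow> \<alpha> j \<in> borel_measurable (PiM I (\<lambda>_. std_normal))"
  shows "(\<lambda>\<omega>. \<lambda>i\<in>I. if i \<in> S then \<alpha> i \<omega> + \<omega> i else \<omega> i) \<in> PiM I (\<lambda>_. std_normal) \<rightarrow>\<^sub>M PiM I (\<lambda>_. std_normal)"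
proof (rule measurable_restrict)
  fix i assume i: "i \<in> I"
  show "(\<lambda>\<omega>. if i \<in> S then \<alpha> i \<omega> + \<omega> i else \<omega> i) \<in> PiM I (\<lambda>_. std_normal) \<rightarrow>\<^sub>M std_normal"
  proof (cases "i \<in> S")
    case True
    with assms i show ?thesis by (simp add: borel_measurable_add measurable_component_std_normal)
  qed (simp add: i measurable_component_std_normal)
qed

lemma borel_measurable_prod_normal_shift_density:
  assumes "S \<subseteq> I" and "\<And>j. j \<in> S \<Longrightarrow> \<alpha> j \<in> borel_measurable (PiM I (\<lambda>_. std_normal))"
  shows "(\<lambda>\<omega>. \<Prod>j\<in>S. ennreal (normal_shift_density (\<alpha> j \<omega>) (\<omega> j))) \<in> borel_measurable (PiM I (\<lambda>_. std_normal))"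
proof (intro borel_measurable_prod_ennreal measurable_compose[OF _ measurable_ennreal])
  fix j assume j: "j \<in> S"
  have "\<alpha> j \<in> borel_measurable (PiM I (\<lambda>_. std_normal))" "(\<lambda>\<omega>. \<omega> j) \<in> borel_measurable (PiM I (\<lambda>_. std_normal))"
    using assms j by (auto intro: measurable_component_std_normal)
  then have "(\<lambda>\<omega>. \<alpha> j \<omega> * \<omega> j - (\<alpha> j \<omega>)\<^sup>2 / 2) \<in> borel_measurable (PiM I (\<lambda>_. std_normal))"
    by (intro borel_measurable_diff borel_measurable_times borel_measurable_divide borel_measurable_power
        borel_measurable_const)
  from measurable_compose[OF this borel_measurable_exp]
  show "(\<lambda>\<omega>. normal_shift_density (\<alpha> j \<omega>) (\<omega> j)) \<in> borel_measurable (PiM I (\<lambda>_. std_normal))"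
    unfolding normal_shift_density_def .
qed

text \<open>Fubini over the unsheared coordinates \<open>R\<close> reduces the shear to a translation in \<open>S\<close>.\<close>
lemma nn_integral_PiM_std_normal_shear:
  fixes R S :: "'i set" and \<alpha> :: "'i \<Rightarrow> ('i \<Rightarrow> real) \<Rightarrow> real"
  assumes fin: "finite R" "finite S" and disj: "R \<inter> S = {}"
    and local: "\<And>j \<omega>. j \<in> S \<Longrightarrow> \<alpha> j \<omega> = \<alpha> j (restrict \<omega> R)"
    and \<alpha>_meas: "\<And>j. j \<in> S \<Longrightarrow> \<alpha> j \<in> borel_measurable (PiM (R \<union> S) (\<lambda>_. std_normal))"
    and H[measurable]: "H \<in> borel_measurable (PiM (R \<union> S) (\<lambda>_. std_normal))"
  shows "(\<integral>\<^sup>+\<omega>. H (\<lambda>i\<in>R \<union> S. if i \<in> S then \<alpha> i \<omega> + \<omega> i else \<omega> i) \<partial>PiM (R \<union> S) (\<lambda>_. std_normal))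
       = (\<integral>\<^sup>+\<omega>. (\<Prod>j\<in>S. ennreal (normal_shift_density (\<alpha> j \<omega>) (\<omega> j))) * H \<omega> \<partial>PiM (R \<union> S) (\<lambda>_. std_normal))"
proof -
  interpret P: product_prob_space "\<lambda>_. std_normal" by (rule product_prob_space_std_normal)
  define shear where "shear = (\<lambda>\<omega>. \<lambda>i\<in>R \<union> S. if i \<in> S then \<alpha> i \<omega> + \<omega> i else \<omega> i)"
  define \<rho> where "\<rho> = (\<lambda>\<omega>. \<Prod>j\<in>S. ennreal (normal_shift_density (\<alpha> j \<omega>) (\<omega> j)))"
  have [measurable]: "\<rho> \<in> borel_measurable (PiM (R \<union> S) (\<lambda>_. std_normal))"
    unfolding \<rho>_def by (rule borel_measurable_prod_normal_shift_density) (auto intro: \<alpha>_meas)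
  have "(\<lambda>\<omega>. H (shear \<omega>)) \<in> borel_measurable (PiM (R \<union> S) (\<lambda>_. std_normal))"
    using measurable_comp[OF measurable_PiM_std_normal_shear[OF \<alpha>_meas] H] by (simp add: comp_def shear_def)
  then have "(\<integral>\<^sup>+\<omega>. H (shear \<omega>) \<partial>PiM (R \<union> S) (\<lambda>_. std_normal))
      = (\<integral>\<^sup>+x. (\<integral>\<^sup>+y. H (shear (merge R S (x, y))) \<partial>PiM S (\<lambda>_. std_normal)) \<partial>PiM R (\<lambda>_. std_normal))"
    by (rule P.product_nn_integral_fold[OF disj fin])
  also have "\<dots> = (\<integral>\<^sup>+x. (\<integral>\<^sup>+y. \<rho> (merge R S (x, y)) * H (merge R S (x, y)) \<partial>PiM S (\<lambda>_. std_normal))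
      \<partial>PiM R (\<lambda>_. std_normal))"
  proof (rule nn_integral_cong)
    fix x assume x: "x \<in> space (PiM R (\<lambda>_. std_normal))"
    have \<alpha>_merge: "\<alpha> j (merge R S (x, y)) = \<alpha> j x" if "j \<in> S" for j y
    proof -
      have "restrict (merge R S (x, y)) R = restrict x R"
        by (auto simp: merge_def restrict_def)
      moreover have "restrict x R = x"
        using x by (auto simp: space_PiM PiE_def extensional_restrict)
      ultimately show ?thesis using local[OF that, of "merge R S (x, y)"] by metis
    qed
    have "shear (merge R S (x, y)) = merge R S (x, \<lambda>j\<in>S. \<alpha> j x + 1 * y j)" for y
    proof -
      have "\<And>j. j \<in> S \<Longrightarrow> \<alpha> j (merge R S (x, y)) = \<alpha> j x" by (rule \<alpha>_merge)
      then show ?thesis unfolding shear_def using disj by (auto simp: fun_eq_iff)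
    qed
    then have "(\<integral>\<^sup>+y. H (shear (merge R S (x, y))) \<partial>PiM S (\<lambda>_. std_normal))
        = (\<integral>\<^sup>+y. H (merge R S (x, \<lambda>j\<in>S. \<alpha> j x + 1 * y j)) \<partial>PiM S (\<lambda>_. std_normal))"
      by simp
    also have "\<dots> = (\<integral>\<^sup>+y. (\<Prod>j\<in>S. ennreal (normal_shift_density (\<alpha> j x) (y j))) * H (merge R S (x, y))
        \<partial>PiM S (\<lambda>_. std_normal))"
    proof (rule nn_integral_PiM_std_normal_affine[OF fin(2)])
      show "(\<lambda>y. H (merge R S (x, y))) \<in> borel_measurable (PiM S (\<lambda>_. std_normal))"
        using x by measurable
    qed simp
    also have "\<dots> = (\<integral>\<^sup>+y. \<rho> (merge R S (x, y)) * H (merge R S (x, y)) \<partial>PiM S (\<lambda>_. std_normal))"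
      unfolding \<rho>_def using disj
      by (intro nn_integral_cong arg_cong2[where f="(*)"] prod.cong refl) (simp add: \<alpha>_merge)
    finally show "(\<integral>\<^sup>+y. H (shear (merge R S (x, y))) \<partial>PiM S (\<lambda>_. std_normal)) = \<dots>" .
  qed
  also have "\<dots> = (\<integral>\<^sup>+\<omega>. \<rho> \<omega> * H \<omega> \<partial>PiM (R \<union> S) (\<lambda>_. std_normal))"
    by (intro P.product_nn_integral_fold[OF disj fin, symmetric]) measurable
  finally show ?thesis unfolding shear_def \<rho>_def .
qed

lemma gidx_set_iff[simp]:
  "Nn i \<in> gidx_set K N \<longleftrightarrow> i < N" "Ww k \<in> gidx_set K N \<longleftrightarrow> k < K"
  "Hh k \<in> gidx_set K N \<longleftrightarrow> k < K" "Ss i k \<in> gidx_set K N \<longleftrightarrow> i < N \<and> k < K"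
  by (auto simp: gidx_set_def)

lemma finite_gidx_set[simp]: "finite (gidx_set K N)"
  by (simp add: gidx_set_def)

lemma sum_gidx_set:
  fixes f :: "gidx \<Rightarrow> 'a::comm_monoid_add"
  shows "(\<Sum>j\<in>gidx_set K N. f j) = (\<Sum>i<N. f (Nn i)) + (\<Sum>k<K. f (Ww k)) + (\<Sum>k<K. f (Hh k))
      + (\<Sum>i<N. \<Sum>k<K. f (Ss i k))"
proof -
  have "(\<Sum>j\<in>gidx_set K N. f j) = (\<Sum>j\<in>Nn ` {..<N}. f j) + (\<Sum>j\<in>Ww ` {..<K}. f j) + (\<Sum>j\<in>Hh ` {..<K}. f j)
      + (\<Sum>j\<in>(\<lambda>(i,k). Ss i k) ` ({..<N} \<times> {..<K}). f j)"
    unfolding gidx_set_def by (subst sum.union_disjoint, auto)+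
  also have "\<dots> = (\<Sum>i<N. f (Nn i)) + (\<Sum>k<K. f (Ww k)) + (\<Sum>k<K. f (Hh k)) + (\<Sum>(i,k)\<in>{..<N} \<times> {..<K}. f (Ss i k))"
    by (subst sum.reindex, simp add: inj_on_def)+ (simp add: case_prod_unfold)
  finally show ?thesis by (simp add: sum.cartesian_product)
qed

lemma prob_space_data_space: "prob_space (data_space K N)"
  unfolding data_space_def by (intro prob_space_PiM prob_space_std_normal)

lemma measurable_data_space_component[measurable]:
  "j \<in> gidx_set K N \<Longrightarrow> (\<lambda>\<omega>. \<omega> j) \<in> borel_measurable (data_space K N)"
  unfolding data_space_def by (rule measurable_component_std_normal)

lemma borel_measurable_hamil[measurable]:
  "(\<lambda>\<omega>. hamil K N B lam t u \<omega> x) \<in> borel_measurable (data_space K N)"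
  unfolding hamil_def h_u_def by measurable

definition spin_mult :: "nat \<Rightarrow> (nat \<Rightarrow> real) \<Rightarrow> (nat \<Rightarrow> real) \<Rightarrow> nat \<Rightarrow> real" where
  "spin_mult K x y = (\<lambda>k\<in>{..<K}. x k * y k)"

lemma spins_cases: "\<tau> \<in> spins K \<Longrightarrow> k < K \<Longrightarrow> \<tau> k = 1 \<or> \<tau> k = -1"
  by (auto simp: spins_def PiE_def Pi_def)

lemma spins_square: "\<tau> \<in> spins K \<Longrightarrow> k < K \<Longrightarrow> \<tau> k * \<tau> k = 1"
  using spins_cases by fastforce

lemma finite_spins[simp]: "finite (spins K)"
  unfolding spins_def by (auto intro!: finite_PiE)

lemma ones_in_spins: "(\<lambda>k\<in>{..<K}. 1) \<in> spins K"
  unfolding spins_def by auto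

lemma spin_mult_apply: "k < K \<Longrightarrow> spin_mult K x y k = x k * y k"
  by (simp add: spin_mult_def)

lemma spin_mult_commute: "spin_mult K x y = spin_mult K y x"
  by (auto simp: spin_mult_def fun_eq_iff mult.commute)

lemma spin_mult_in_spins:
  assumes "x \<in> spins K" "y \<in> spins K"
  shows "spin_mult K x y \<in> spins K"
proof -
  have "x k * y k \<in> {-1, 1}" if "k < K" for k
    using spins_cases[OF assms(1) that] spins_cases[OF assms(2) that] by auto
  then show ?thesis by (simp add: spins_def spin_mult_def PiE_iff)
qed

lemma spin_mult_cancel: "\<tau> \<in> spins K \<Longrightarrow> x \<in> spins K \<Longrightarrow> spin_mult K \<tau> (spin_mult K \<tau> x) = x"
  using spins_square[of \<tau> K]
  by (auto simp: spin_mult_def fun_eq_iff spins_def PiE_def extensional_def mult.assoc[symmetric])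

lemma spin_mult_cancel_right: "\<tau> \<in> spins K \<Longrightarrow> x \<in> spins K \<Longrightarrow> spin_mult K (spin_mult K \<tau> x) \<tau> = x"
  by (simp add: spin_mult_commute[of K "spin_mult K \<tau> x"] spin_mult_cancel)

lemma spin_mult_gauge: "\<tau> \<in> spins K \<Longrightarrow> spin_mult K (spin_mult K \<tau> x) (spin_mult K \<tau> y) = spin_mult K x y"
  using spins_square[of \<tau> K] by (auto simp: spin_mult_def fun_eq_iff algebra_simps)

lemma bij_betw_spin_mult: "\<tau> \<in> spins K \<Longrightarrow> bij_betw (spin_mult K \<tau>) (spins K) (spins K)"
  by (rule bij_betwI[where g="spin_mult K \<tau>"]) (auto simp: spin_mult_in_spins spin_mult_cancel)

lemma magn_spin_mult: "magn K (spin_mult K x y) = overlap K x y"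
  unfolding magn_def overlap_def by (simp add: spin_mult_apply)

definition noise_idx :: "nat \<Rightarrow> gidx set" where
  "noise_idx N = Nn ` {..<N}"

lemma noise_idx_subset: "noise_idx N \<subseteq> gidx_set K N"
  by (auto simp: noise_idx_def)

text \<open>
  \<open>G\<^sub>\<tau>\<close> is \<open>gauge_map K N \<tau> sl su c\<close>, whose parameters stand for \<open>\<surd>\<lambda>(t), \<surd>u, \<surd>(B(t)/N)\<close>.
  \<open>gauge_sign\<close> is \<open>\<plusminus>1\<close> even for \<open>\<tau> \<notin> spins K\<close>, so the measure-theoretic facts about the
  gauge map need no hypothesis on \<open>\<tau>\<close>.
\<close>
definition gauge_offset :: "(nat \<Rightarrow> real) \<Rightarrow> real \<Rightarrow> real \<Rightarrow> gidx \<Rightarrow> real" where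
  "gauge_offset \<tau> sl su j =
     (case j of Ww k \<Rightarrow> sl * (\<tau> k - 1) | Hh k \<Rightarrow> su * (\<tau> k - 1) | _ \<Rightarrow> 0)"

definition gauge_sign :: "(nat \<Rightarrow> real) \<Rightarrow> gidx \<Rightarrow> real" where
  "gauge_sign \<tau> j =
     (case j of Nn i \<Rightarrow> 1 | Ww k \<Rightarrow> if \<tau> k = -1 then -1 else 1
      | Hh k \<Rightarrow> if \<tau> k = -1 then -1 else 1 | Ss i k \<Rightarrow> if \<tau> k = -1 then -1 else 1)"

definition gauge_drift :: "nat \<Rightarrow> (nat \<Rightarrow> real) \<Rightarrow> real \<Rightarrow> gidx \<Rightarrow> (gidx \<Rightarrow> real) \<Rightarrow> real" where
  "gauge_drift K \<tau> c j \<omega> = (case j of Nn i \<Rightarrow> - c * (\<Sum>k<K. \<omega> (Ss i k) * (1 - \<tau> k)) | _ \<Rightarrow> 0)"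

definition gauge_reflect :: "nat \<Rightarrow> nat \<Rightarrow> (nat \<Rightarrow> real) \<Rightarrow> real \<Rightarrow> real
    \<Rightarrow> (gidx \<Rightarrow> real) \<Rightarrow> gidx \<Rightarrow> real" where
  "gauge_reflect K N \<tau> sl su \<omega> = (\<lambda>j\<in>gidx_set K N. gauge_offset \<tau> sl su j + gauge_sign \<tau> j * \<omega> j)"

definition gauge_shear :: "nat \<Rightarrow> nat \<Rightarrow> (nat \<Rightarrow> real) \<Rightarrow> real \<Rightarrow> (gidx \<Rightarrow> real) \<Rightarrow> gidx \<Rightarrow> real" where
  "gauge_shear K N \<tau> c \<omega> =
     (\<lambda>j\<in>gidx_set K N. if j \<in> noise_idx N then gauge_drift K \<tau> c j \<omega> + \<omega> j else \<omega> j)"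

definition gauge_map :: "nat \<Rightarrow> nat \<Rightarrow> (nat \<Rightarrow> real) \<Rightarrow> real \<Rightarrow> real \<Rightarrow> real
    \<Rightarrow> (gidx \<Rightarrow> real) \<Rightarrow> gidx \<Rightarrow> real" where
  "gauge_map K N \<tau> sl su c \<omega> = gauge_shear K N \<tau> c (gauge_reflect K N \<tau> sl su \<omega>)"

definition gauge_density :: "nat \<Rightarrow> nat \<Rightarrow> (nat \<Rightarrow> real) \<Rightarrow> real \<Rightarrow> real \<Rightarrow> real
    \<Rightarrow> (gidx \<Rightarrow> real) \<Rightarrow> real" where
  "gauge_density K N \<tau> sl su c \<omega> =
     (\<Prod>j\<in>gidx_set K N. normal_shift_density (gauge_offset \<tau> sl su j) (\<omega> j))
     * (\<Prod>j\<in>noise_idx N. normal_shift_density (gauge_drift K \<tau> c j \<omega>) (\<omega> j))"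

lemma gauge_sign_cases: "gauge_sign \<tau> j = 1 \<or> gauge_sign \<tau> j = -1"
  by (auto simp: gauge_sign_def split: gidx.splits)

lemma gauge_sign_spins:
  assumes "\<tau> \<in> spins K" "k < K"
  shows "gauge_sign \<tau> (Ww k) = \<tau> k" "gauge_sign \<tau> (Hh k) = \<tau> k" "gauge_sign \<tau> (Ss i k) = \<tau> k"
  using spins_cases[OF assms] by (auto simp: gauge_sign_def)

lemma gauge_drift_restrict:
  "j \<in> noise_idx N \<Longrightarrow> gauge_drift K \<tau> c j \<omega> = gauge_drift K \<tau> c j (restrict \<omega> (gidx_set K N - noise_idx N))"
  by (auto simp: noise_idx_def gauge_drift_def restrict_def intro!: sum.cong)

lemma borel_measurable_gauge_drift:
  assumes "j \<in> noise_idx N"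
  shows "gauge_drift K \<tau> c j \<in> borel_measurable (PiM (gidx_set K N) (\<lambda>_. std_normal))"
proof -
  obtain i where j: "j = Nn i" "i < N" using assms by (auto simp: noise_idx_def)
  have [measurable]: "k < K \<Longrightarrow> (\<lambda>\<omega>. \<omega> (Ss i k)) \<in> borel_measurable (PiM (gidx_set K N) (\<lambda>_. std_normal))" for k
    using j by (intro measurable_component_std_normal) simp
  show ?thesis unfolding j gauge_drift_def by simp measurable
qed

lemma gauge_density_nonneg: "0 \<le> gauge_density K N \<tau> sl su c \<omega>"
  unfolding gauge_density_def by (intro mult_nonneg_nonneg prod_nonneg) (auto simp: normal_shift_density_nonneg)

lemma borel_measurable_gauge_density[measurable]:
  "gauge_density K N \<tau> sl su c \<in> borel_measurable (data_space K N)"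
proof -
  have [measurable]: "gauge_drift K \<tau> c j \<in> borel_measurable (data_space K N)" if "j \<in> noise_idx N" for j
    using borel_measurable_gauge_drift[OF that] unfolding data_space_def .
  have [measurable]: "j \<in> noise_idx N \<Longrightarrow> j \<in> gidx_set K N" for j
    using noise_idx_subset by blast
  show ?thesis unfolding gauge_density_def normal_shift_density_def by measurable
qed

lemma measurable_gauge_reflect: "gauge_reflect K N \<tau> sl su \<in> data_space K N \<rightarrow>\<^sub>M data_space K N"
  unfolding gauge_reflect_def data_space_def by (rule measurable_PiM_std_normal_affine)

lemma measurable_gauge_shear: "gauge_shear K N \<tau> c \<in> data_space K N \<rightarrow>\<^sub>M data_space K N"
  unfolding gauge_shear_def data_space_def
  by (rule measurable_PiM_std_normal_shear) (rule borel_measurable_gauge_drift)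

lemma measurable_gauge_map: "gauge_map K N \<tau> sl su c \<in> data_space K N \<rightarrow>\<^sub>M data_space K N"
  using measurable_comp[OF measurable_gauge_reflect measurable_gauge_shear]
  unfolding gauge_map_def[abs_def] by (simp add: comp_def)

lemma nn_integral_gauge_map:
  assumes F[measurable]: "F \<in> borel_measurable (data_space K N)"
  shows "(\<integral>\<^sup>+\<omega>. F (gauge_map K N \<tau> sl su c \<omega>) \<partial>data_space K N)
       = (\<integral>\<^sup>+\<omega>. ennreal (gauge_density K N \<tau> sl su c \<omega>) * F \<omega> \<partial>data_space K N)"
proof -
  let ?I = "gidx_set K N"
  let ?P = "PiM (gidx_set K N) (\<lambda>_. std_normal)"
  define \<rho> where "\<rho> \<omega> = (\<Prod>j\<in>?I. ennreal (normal_shift_density (gauge_offset \<tau> sl su j) (\<omega> j)))" for \<omega>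
  have F': "F \<in> borel_measurable ?P" using F unfolding data_space_def .
  have shear: "gauge_shear K N \<tau> c \<in> ?P \<rightarrow>\<^sub>M ?P"
    using measurable_gauge_shear unfolding data_space_def .
  have \<rho>_meas: "\<rho> \<in> borel_measurable ?P"
    unfolding \<rho>_def by (rule borel_measurable_prod_normal_shift_density) simp_all
  \<comment> \<open>the shear moves only the \<open>n\<close>-coordinates, on which the offsets vanish\<close>
  have \<rho>_shear: "\<rho> (gauge_shear K N \<tau> c \<omega>) = \<rho> \<omega>" for \<omega>
    unfolding \<rho>_def gauge_shear_def
    by (intro prod.cong refl) (auto simp: noise_idx_def gauge_offset_def normal_shift_density_def)
  have "(\<integral>\<^sup>+\<omega>. F (gauge_map K N \<tau> sl su c \<omega>) \<partial>?P)
      = (\<integral>\<^sup>+\<omega>. (\<lambda>\<omega>. F (gauge_shear K N \<tau> c \<omega>)) (\<lambda>j\<in>?I. gauge_offset \<tau> sl su j + gauge_sign \<tau> j * \<omega> j) \<partial>?P)"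
    by (simp add: gauge_map_def gauge_reflect_def)
  also have "\<dots> = (\<integral>\<^sup>+\<omega>. \<rho> \<omega> * F (gauge_shear K N \<tau> c \<omega>) \<partial>?P)"
    unfolding \<rho>_def
    by (rule nn_integral_PiM_std_normal_affine[OF finite_gidx_set gauge_sign_cases])
      (rule measurable_compose[OF shear F'])
  also have "\<dots> = (\<integral>\<^sup>+\<omega>. (\<lambda>\<omega>. \<rho> \<omega> * F \<omega>) (gauge_shear K N \<tau> c \<omega>) \<partial>?P)"
    by (simp add: \<rho>_shear)
  also have "\<dots> = (\<integral>\<^sup>+\<omega>. (\<Prod>j\<in>noise_idx N. ennreal (normal_shift_density (gauge_drift K \<tau> c j \<omega>) (\<omega> j)))
      * (\<rho> \<omega> * F \<omega>) \<partial>?P)"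
  proof -
    have U: "(?I - noise_idx N) \<union> noise_idx N = ?I" using noise_idx_subset by blast
    have fin: "finite (noise_idx N)" by (simp add: noise_idx_def)
    have H: "(\<lambda>\<omega>. \<rho> \<omega> * F \<omega>) \<in> borel_measurable ?P" using \<rho>_meas F' by measurable
    show ?thesis unfolding gauge_shear_def
      by (rule nn_integral_PiM_std_normal_shear[of "?I - noise_idx N" "noise_idx N" "gauge_drift K \<tau> c", unfolded U])
        (simp, rule fin, blast, erule gauge_drift_restrict, erule borel_measurable_gauge_drift, rule H)
  qed
  also have "\<dots> = (\<integral>\<^sup>+\<omega>. ennreal (gauge_density K N \<tau> sl su c \<omega>) * F \<omega> \<partial>?P)"
    unfolding gauge_density_def \<rho>_def
    by (simp add: ennreal_mult prod_ennreal prod_nonneg normal_shift_density_nonneg ac_simps)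
  finally show ?thesis unfolding data_space_def .
qed

lemma distr_gauge_map: "distr (data_space K N) (data_space K N) (gauge_map K N \<tau> sl su c)
     = density (data_space K N) (\<lambda>\<omega>. ennreal (gauge_density K N \<tau> sl su c \<omega>))"
proof (rule measure_eqI)
  fix A assume "A \<in> sets (distr (data_space K N) (data_space K N) (gauge_map K N \<tau> sl su c))"
  then have A: "A \<in> sets (data_space K N)" by simp
  have "emeasure (distr (data_space K N) (data_space K N) (gauge_map K N \<tau> sl su c)) A
      = (\<integral>\<^sup>+\<omega>. indicator A \<omega> \<partial>distr (data_space K N) (data_space K N) (gauge_map K N \<tau> sl su c))"
    using A by (simp flip: nn_integral_indicator)
  also have "\<dots> = (\<integral>\<^sup>+\<omega>. indicator A (gauge_map K N \<tau> sl su c \<omega>) \<partial>data_space K N)"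
    using A by (intro nn_integral_distr measurable_gauge_map) simp
  also have "\<dots> = (\<integral>\<^sup>+\<omega>. ennreal (gauge_density K N \<tau> sl su c \<omega>) * indicator A \<omega> \<partial>data_space K N)"
    using A by (intro nn_integral_gauge_map) simp
  also have "\<dots> = emeasure (density (data_space K N) (\<lambda>\<omega>. ennreal (gauge_density K N \<tau> sl su c \<omega>))) A"
    using A by (simp add: emeasure_density)
  finally show "emeasure (distr (data_space K N) (data_space K N) (gauge_map K N \<tau> sl su c)) A
      = emeasure (density (data_space K N) (\<lambda>\<omega>. ennreal (gauge_density K N \<tau> sl su c \<omega>))) A" .
qed simp

lemma integral_gauge_map:
  fixes F :: "(gidx \<Rightarrow> real) \<Rightarrow> real"
  assumes F[measurable]: "F \<in> borel_measurable (data_space K N)"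
  shows "(\<integral>\<omega>. F (gauge_map K N \<tau> sl su c \<omega>) \<partial>data_space K N)
       = (\<integral>\<omega>. gauge_density K N \<tau> sl su c \<omega> * F \<omega> \<partial>data_space K N)"
  using integral_distr[OF measurable_gauge_map F]
  by (simp add: distr_gauge_map integral_density gauge_density_nonneg)

lemma integrable_gauge_density_mult:
  fixes F :: "(gidx \<Rightarrow> real) \<Rightarrow> real"
  assumes F[measurable]: "F \<in> borel_measurable (data_space K N)" and bounded: "\<And>\<omega>. \<bar>F \<omega>\<bar> \<le> C"
  shows "integrable (data_space K N) (\<lambda>\<omega>. gauge_density K N \<tau> sl su c \<omega> * F \<omega>)"
proof -
  interpret prob_space "data_space K N" by (rule prob_space_data_space)
  have "integrable (data_space K N) (\<lambda>\<omega>. F (gauge_map K N \<tau> sl su c \<omega>))"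
    using bounded measurable_comp[OF measurable_gauge_map F]
    by (intro integrable_const_bound[where B=C]) (auto simp: comp_def)
  then have "integrable (distr (data_space K N) (data_space K N) (gauge_map K N \<tau> sl su c)) F"
    by (subst integrable_distr_eq[OF measurable_gauge_map F])
  then show ?thesis
    unfolding distr_gauge_map by (subst (asm) integrable_density) (auto simp: gauge_density_nonneg)
qed

abbreviation model_gauge_map :: "nat \<Rightarrow> nat \<Rightarrow> (real \<Rightarrow> real) \<Rightarrow> (real \<Rightarrow> real) \<Rightarrow> real \<Rightarrow> real
    \<Rightarrow> (nat \<Rightarrow> real) \<Rightarrow> (gidx \<Rightarrow> real) \<Rightarrow> gidx \<Rightarrow> real" where
  "model_gauge_map K N B lam t u \<tau> \<equiv> gauge_map K N \<tau> (sqrt (lam t)) (sqrt u) (sqrt (B t) / sqrt (real N))"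

abbreviation model_gauge_density :: "nat \<Rightarrow> nat \<Rightarrow> (real \<Rightarrow> real) \<Rightarrow> (real \<Rightarrow> real) \<Rightarrow> real \<Rightarrow> real
    \<Rightarrow> (nat \<Rightarrow> real) \<Rightarrow> (gidx \<Rightarrow> real) \<Rightarrow> real" where
  "model_gauge_density K N B lam t u \<tau> \<equiv> gauge_density K N \<tau> (sqrt (lam t)) (sqrt u) (sqrt (B t) / sqrt (real N))"

lemma gauge_map_Nn:
  assumes "\<tau> \<in> spins K" "i < N"
  shows "gauge_map K N \<tau> sl su c \<omega> (Nn i) = \<omega> (Nn i) - c * (\<Sum>k<K. \<tau> k * \<omega> (Ss i k) * (1 - \<tau> k))"
proof -
  have "gauge_sign \<tau> (Nn i) = 1" by (simp add: gauge_sign_def)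
  with assms show ?thesis unfolding gauge_map_def gauge_shear_def gauge_reflect_def
    by (auto simp: noise_idx_def gauge_drift_def gauge_offset_def gauge_sign_spins intro!: sum.cong)
qed

lemma gauge_map_Ww:
  assumes "\<tau> \<in> spins K" "k < K"
  shows "gauge_map K N \<tau> sl su c \<omega> (Ww k) = sl * (\<tau> k - 1) + \<tau> k * \<omega> (Ww k)"
  using assms unfolding gauge_map_def gauge_shear_def gauge_reflect_def
  by (auto simp: noise_idx_def gauge_offset_def gauge_sign_spins)

lemma gauge_map_Hh:
  assumes "\<tau> \<in> spins K" "k < K"
  shows "gauge_map K N \<tau> sl su c \<omega> (Hh k) = su * (\<tau> k - 1) + \<tau> k * \<omega> (Hh k)"
  using assms unfolding gauge_map_def gauge_shear_def gauge_reflect_def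
  by (auto simp: noise_idx_def gauge_offset_def gauge_sign_spins)

lemma gauge_map_Ss:
  assumes "\<tau> \<in> spins K" "i < N" "k < K"
  shows "gauge_map K N \<tau> sl su c \<omega> (Ss i k) = \<tau> k * \<omega> (Ss i k)"
  using assms unfolding gauge_map_def gauge_shear_def gauge_reflect_def
  by (auto simp: noise_idx_def gauge_offset_def gauge_sign_spins)

lemma gauge_map_noise_term:
  assumes \<tau>: "\<tau> \<in> spins K" and i: "i < N"
  shows "gauge_map K N \<tau> sl su c \<omega> (Nn i) + c * (\<Sum>k<K. gauge_map K N \<tau> sl su c \<omega> (Ss i k) * (1 - spin_mult K \<tau> x k))
       = \<omega> (Nn i) + c * (\<Sum>k<K. \<omega> (Ss i k) * (1 - x k))"
proof -
  define A where "A = (\<Sum>k<K. \<tau> k * \<omega> (Ss i k) * (1 - \<tau> k))"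
  define A' where "A' = (\<Sum>k<K. \<tau> k * \<omega> (Ss i k) * (1 - \<tau> k * x k))"
  have "(\<Sum>k<K. gauge_map K N \<tau> sl su c \<omega> (Ss i k) * (1 - spin_mult K \<tau> x k)) = A'"
    unfolding A'_def by (intro sum.cong refl) (simp add: gauge_map_Ss[OF \<tau> i] spin_mult_apply)
  moreover have "A' - A = (\<Sum>k<K. \<omega> (Ss i k) * (1 - x k))"
    unfolding A_def A'_def sum_subtractf[symmetric]
    by (intro sum.cong refl) (use spins_cases[OF \<tau>] in \<open>force simp: algebra_simps\<close>)
  moreover have "\<omega> (Nn i) - c * A + c * A' = \<omega> (Nn i) + c * (A' - A)"
    by (simp add: algebra_simps)
  ultimately show ?thesis
    by (simp add: gauge_map_Nn[OF \<tau> i] A_def)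
qed

lemma gauge_map_w_term:
  assumes \<tau>: "\<tau> \<in> spins K" and k: "k < K"
  shows "(gauge_map K N \<tau> sl su c \<omega> (Ww k) + sl * (1 - spin_mult K \<tau> x k))\<^sup>2 = (\<omega> (Ww k) + sl * (1 - x k))\<^sup>2"
proof -
  have "gauge_map K N \<tau> sl su c \<omega> (Ww k) + sl * (1 - spin_mult K \<tau> x k) = \<tau> k * (\<omega> (Ww k) + sl * (1 - x k))"
    using spins_cases[OF \<tau> k] by (auto simp: gauge_map_Ww[OF \<tau> k] spin_mult_apply[OF k] algebra_simps)
  then show ?thesis
    using spins_cases[OF \<tau> k] by (auto simp: power_mult_distrib)
qed

lemma gauge_map_h_term:
  assumes \<tau>: "\<tau> \<in> spins K" and k: "k < K" and u: "0 \<le> u"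
  shows "sqrt u * (gauge_map K N \<tau> sl (sqrt u) c \<omega> (Hh k) * spin_mult K \<tau> x k) + u * spin_mult K \<tau> x k
       = sqrt u * (\<omega> (Hh k) * x k) + u * x k"
  using spins_cases[OF \<tau> k] u
  by (auto simp: gauge_map_Hh[OF \<tau> k] spin_mult_apply[OF k] algebra_simps)

lemma hamil_gauge_map:
  assumes \<tau>: "\<tau> \<in> spins K" and u: "0 \<le> u"
  shows "hamil K N B lam t u (model_gauge_map K N B lam t u \<tau> \<omega>) (spin_mult K \<tau> x)
       = hamil K N B lam t u \<omega> x + sqrt u * (\<Sum>k<K. \<bar>\<omega> (Hh k)\<bar>)
         - sqrt u * (\<Sum>k<K. \<bar>model_gauge_map K N B lam t u \<tau> \<omega> (Hh k)\<bar>)"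
proof -
  let ?G = "model_gauge_map K N B lam t u \<tau> \<omega>" and ?c = "sqrt (B t) / sqrt (real N)"
  have noise: "(\<Sum>i<N. (?G (Nn i) + ?c * (\<Sum>k<K. ?G (Ss i k) * (1 - spin_mult K \<tau> x k)))\<^sup>2)
      = (\<Sum>i<N. (\<omega> (Nn i) + ?c * (\<Sum>k<K. \<omega> (Ss i k) * (1 - x k)))\<^sup>2)"
    by (intro sum.cong refl) (subst gauge_map_noise_term[OF \<tau>], simp_all)
  have w: "(\<Sum>k<K. (?G (Ww k) + sqrt (lam t) * (1 - spin_mult K \<tau> x k))\<^sup>2)
      = (\<Sum>k<K. (\<omega> (Ww k) + sqrt (lam t) * (1 - x k))\<^sup>2)"
    by (intro sum.cong refl) (simp add: gauge_map_w_term[OF \<tau>])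
  have h: "sqrt u * (\<Sum>k<K. ?G (Hh k) * spin_mult K \<tau> x k) + u * (\<Sum>k<K. spin_mult K \<tau> x k)
      = sqrt u * (\<Sum>k<K. \<omega> (Hh k) * x k) + u * (\<Sum>k<K. x k)"
    using gauge_map_h_term[OF \<tau> _ u] by (simp add: sum_distrib_left flip: sum.distrib)
  show ?thesis
    unfolding hamil_def h_u_def noise w using h by simp
qed

lemma gauge_density_exp:
  "gauge_density K N \<tau> sl su c \<omega> = exp (
       (\<Sum>k<K. sl * (\<tau> k - 1) * \<omega> (Ww k) - (sl * (\<tau> k - 1))\<^sup>2 / 2)
     + (\<Sum>k<K. su * (\<tau> k - 1) * \<omega> (Hh k) - (su * (\<tau> k - 1))\<^sup>2 / 2)
     + (\<Sum>i<N. gauge_drift K \<tau> c (Nn i) \<omega> * \<omega> (Nn i) - (gauge_drift K \<tau> c (Nn i) \<omega>)\<^sup>2 / 2))"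
proof -
  have "(\<Sum>j\<in>gidx_set K N. gauge_offset \<tau> sl su j * \<omega> j - (gauge_offset \<tau> sl su j)\<^sup>2 / 2)
      = (\<Sum>k<K. sl * (\<tau> k - 1) * \<omega> (Ww k) - (sl * (\<tau> k - 1))\<^sup>2 / 2)
      + (\<Sum>k<K. su * (\<tau> k - 1) * \<omega> (Hh k) - (su * (\<tau> k - 1))\<^sup>2 / 2)"
    by (simp add: sum_gidx_set gauge_offset_def)
  moreover have "(\<Sum>j\<in>noise_idx N. gauge_drift K \<tau> c j \<omega> * \<omega> j - (gauge_drift K \<tau> c j \<omega>)\<^sup>2 / 2)
      = (\<Sum>i<N. gauge_drift K \<tau> c (Nn i) \<omega> * \<omega> (Nn i) - (gauge_drift K \<tau> c (Nn i) \<omega>)\<^sup>2 / 2)"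
    unfolding noise_idx_def by (subst sum.reindex) (auto simp: inj_on_def)
  moreover have "gauge_density K N \<tau> sl su c \<omega>
      = exp ((\<Sum>j\<in>gidx_set K N. gauge_offset \<tau> sl su j * \<omega> j - (gauge_offset \<tau> sl su j)\<^sup>2 / 2)
           + (\<Sum>j\<in>noise_idx N. gauge_drift K \<tau> c j \<omega> * \<omega> j - (gauge_drift K \<tau> c j \<omega>)\<^sup>2 / 2))"
    unfolding gauge_density_def normal_shift_density_def exp_add by (simp add: exp_sum noise_idx_def)
  ultimately show ?thesis by simp
qed

lemma h_u_diff_ones:
  assumes \<tau>: "\<tau> \<in> spins K" and u: "0 \<le> u"
  shows "h_u K u \<omega> \<tau> - h_u K u \<omega> (\<lambda>_. 1)
       = (\<Sum>k<K. sqrt u * (\<tau> k - 1) * \<omega> (Hh k) - (sqrt u * (\<tau> k - 1))\<^sup>2 / 2)"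
proof -
  have "(\<Sum>k<K. sqrt u * (\<tau> k - 1) * \<omega> (Hh k) - (sqrt u * (\<tau> k - 1))\<^sup>2 / 2)
      = (\<Sum>k<K. sqrt u * (\<omega> (Hh k) * \<tau> k) + u * \<tau> k - sqrt u * \<omega> (Hh k) - u)"
    by (intro sum.cong refl) (use spins_cases[OF \<tau>] u in \<open>force simp: power2_eq_square algebra_simps\<close>)
  then show ?thesis
    unfolding h_u_def by (simp add: sum.distrib sum_subtractf sum_distrib_left)
qed

lemma model_gauge_density_eq:
  assumes \<tau>: "\<tau> \<in> spins K" and u: "0 \<le> u"
  shows "model_gauge_density K N B lam t u \<tau> \<omega>
       = exp (hamil K N B lam t u \<omega> \<tau> - hamil K N B lam t u \<omega> (\<lambda>_. 1))"
proof -
  define c where "c = sqrt (B t) / sqrt (real N)"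
  define sl where "sl = sqrt (lam t)"
  define \<beta> where "\<beta> i = c * (\<Sum>k<K. \<omega> (Ss i k) * (1 - \<tau> k))" for i
  have noise: "- (1/2) * (\<Sum>i<N. (\<omega> (Nn i) + \<beta> i)\<^sup>2) + (1/2) * (\<Sum>i<N. (\<omega> (Nn i))\<^sup>2)
      = (\<Sum>i<N. gauge_drift K \<tau> c (Nn i) \<omega> * \<omega> (Nn i) - (gauge_drift K \<tau> c (Nn i) \<omega>)\<^sup>2 / 2)"
    unfolding sum_distrib_left sum.distrib[symmetric]
    by (intro sum.cong refl) (simp add: gauge_drift_def \<beta>_def power2_eq_square algebra_simps)
  have w: "- (1/2) * (\<Sum>k<K. (\<omega> (Ww k) + sl * (1 - \<tau> k))\<^sup>2) + (1/2) * (\<Sum>k<K. (\<omega> (Ww k))\<^sup>2)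
      = (\<Sum>k<K. sl * (\<tau> k - 1) * \<omega> (Ww k) - (sl * (\<tau> k - 1))\<^sup>2 / 2)"
    unfolding sum_distrib_left sum.distrib[symmetric]
    by (intro sum.cong refl) (simp add: power2_eq_square field_simps)
  have "hamil K N B lam t u \<omega> \<tau> - hamil K N B lam t u \<omega> (\<lambda>_. 1)
      = (- (1/2) * (\<Sum>k<K. (\<omega> (Ww k) + sl * (1 - \<tau> k))\<^sup>2) + (1/2) * (\<Sum>k<K. (\<omega> (Ww k))\<^sup>2))
      + (h_u K u \<omega> \<tau> - h_u K u \<omega> (\<lambda>_. 1))
      + (- (1/2) * (\<Sum>i<N. (\<omega> (Nn i) + \<beta> i)\<^sup>2) + (1/2) * (\<Sum>i<N. (\<omega> (Nn i))\<^sup>2))"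
    unfolding hamil_def \<beta>_def c_def sl_def by simp
  also have "\<dots> = (\<Sum>k<K. sl * (\<tau> k - 1) * \<omega> (Ww k) - (sl * (\<tau> k - 1))\<^sup>2 / 2)
      + (\<Sum>k<K. sqrt u * (\<tau> k - 1) * \<omega> (Hh k) - (sqrt u * (\<tau> k - 1))\<^sup>2 / 2)
      + (\<Sum>i<N. gauge_drift K \<tau> c (Nn i) \<omega> * \<omega> (Nn i) - (gauge_drift K \<tau> c (Nn i) \<omega>)\<^sup>2 / 2)"
    by (simp only: w h_u_diff_ones[OF \<tau> u] noise)
  finally have "gauge_density K N \<tau> sl (sqrt u) c \<omega>
      = exp (hamil K N B lam t u \<omega> \<tau> - hamil K N B lam t u \<omega> (\<lambda>_. 1))"
    unfolding gauge_density_exp by simp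
  then show ?thesis by (simp only: c_def sl_def)
qed

lemma gibbs_weight_pos: "0 < gibbs_weight K N B lam t u \<omega> x"
  by (simp add: gibbs_weight_def)

lemma partition_fn_pos: "0 < partition_fn K N B lam t u \<omega>"
  unfolding partition_fn_def using ones_in_spins[of K]
  by (intro sum_pos2[where i="\<lambda>k\<in>{..<K}. 1"]) (auto simp: gibbs_weight_pos less_imp_le)

lemma gibbs_weight_le_partition_fn: "x \<in> spins K \<Longrightarrow> gibbs_weight K N B lam t u \<omega> x \<le> partition_fn K N B lam t u \<omega>"
  unfolding partition_fn_def by (intro member_le_sum) (auto simp: gibbs_weight_pos less_imp_le)

lemma gibbs_weight_gauge_map:
  assumes "\<tau> \<in> spins K" and "0 \<le> u"
  shows "gibbs_weight K N B lam t u (model_gauge_map K N B lam t u \<tau> \<omega>) (spin_mult K \<tau> x)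
    = exp (sqrt u * (\<Sum>k<K. \<bar>\<omega> (Hh k)\<bar>) - sqrt u * (\<Sum>k<K. \<bar>model_gauge_map K N B lam t u \<tau> \<omega> (Hh k)\<bar>))
      * gibbs_weight K N B lam t u \<omega> x"
  unfolding gibbs_weight_def hamil_gauge_map[OF assms] by (simp add: exp_add[symmetric] algebra_simps)

lemma gibbs_avg1_gauge_map:
  assumes \<tau>: "\<tau> \<in> spins K" and u: "0 \<le> u"
  shows "gibbs_avg1 K N B lam t u (model_gauge_map K N B lam t u \<tau> \<omega>) f
       = gibbs_avg1 K N B lam t u \<omega> (\<lambda>x. f (spin_mult K \<tau> x))"
proof -
  let ?G = "model_gauge_map K N B lam t u \<tau> \<omega>"
  define E where "E = exp (sqrt u * (\<Sum>k<K. \<bar>\<omega> (Hh k)\<bar>) - sqrt u * (\<Sum>k<K. \<bar>?G (Hh k)\<bar>))"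
  have w: "gibbs_weight K N B lam t u ?G (spin_mult K \<tau> x) = E * gibbs_weight K N B lam t u \<omega> x" for x
    unfolding E_def by (rule gibbs_weight_gauge_map[OF \<tau> u])
  have num: "(\<Sum>x\<in>spins K. gibbs_weight K N B lam t u ?G x * f x)
      = E * (\<Sum>x\<in>spins K. gibbs_weight K N B lam t u \<omega> x * f (spin_mult K \<tau> x))"
    by (subst sum.reindex_bij_betw[OF bij_betw_spin_mult[OF \<tau>], symmetric]) (simp add: w sum_distrib_left mult.assoc)
  have den: "partition_fn K N B lam t u ?G = E * partition_fn K N B lam t u \<omega>"
    unfolding partition_fn_def
    by (subst sum.reindex_bij_betw[OF bij_betw_spin_mult[OF \<tau>], symmetric]) (simp add: w sum_distrib_left)
  show ?thesis unfolding gibbs_avg1_def num den by (simp add: E_def)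
qed

lemma gibbs_avg2_gauge_map:
  assumes \<tau>: "\<tau> \<in> spins K" and u: "0 \<le> u"
  shows "gibbs_avg2 K N B lam t u (model_gauge_map K N B lam t u \<tau> \<omega>) f
       = gibbs_avg2 K N B lam t u \<omega> (\<lambda>x y. f (spin_mult K \<tau> x) (spin_mult K \<tau> y))"
proof -
  let ?G = "model_gauge_map K N B lam t u \<tau> \<omega>"
  define E where "E = exp (sqrt u * (\<Sum>k<K. \<bar>\<omega> (Hh k)\<bar>) - sqrt u * (\<Sum>k<K. \<bar>?G (Hh k)\<bar>))"
  have w: "gibbs_weight K N B lam t u ?G (spin_mult K \<tau> x) = E * gibbs_weight K N B lam t u \<omega> x" for x
    unfolding E_def by (rule gibbs_weight_gauge_map[OF \<tau> u])
  have inner: "(\<Sum>y\<in>spins K. gibbs_weight K N B lam t u ?G x * gibbs_weight K N B lam t u ?G y * f x y)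
      = (\<Sum>y\<in>spins K. gibbs_weight K N B lam t u ?G x * (E * gibbs_weight K N B lam t u \<omega> y) * f x (spin_mult K \<tau> y))" for x
    by (subst sum.reindex_bij_betw[OF bij_betw_spin_mult[OF \<tau>], symmetric]) (simp add: w)
  have num: "(\<Sum>x\<in>spins K. \<Sum>y\<in>spins K. gibbs_weight K N B lam t u ?G x * gibbs_weight K N B lam t u ?G y * f x y)
      = (E * E) * (\<Sum>x\<in>spins K. \<Sum>y\<in>spins K. gibbs_weight K N B lam t u \<omega> x * gibbs_weight K N B lam t u \<omega> y
          * f (spin_mult K \<tau> x) (spin_mult K \<tau> y))"
    unfolding inner
    by (subst sum.reindex_bij_betw[OF bij_betw_spin_mult[OF \<tau>], symmetric]) (simp add: w sum_distrib_left algebra_simps)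
  have den: "partition_fn K N B lam t u ?G = E * partition_fn K N B lam t u \<omega>"
    unfolding partition_fn_def
    by (subst sum.reindex_bij_betw[OF bij_betw_spin_mult[OF \<tau>], symmetric]) (simp add: w sum_distrib_left)
  show ?thesis unfolding gibbs_avg2_def num den by (simp add: E_def power2_eq_square)
qed

lemma gibbs_avg1_cong:
  "(\<And>x. x \<in> spins K \<Longrightarrow> f x = f' x) \<Longrightarrow> gibbs_avg1 K N B lam t u \<omega> f = gibbs_avg1 K N B lam t u \<omega> f'"
  unfolding gibbs_avg1_def by (simp cong: sum.cong)

lemma borel_measurable_gibbs_avg1[measurable]:
  "(\<lambda>\<omega>. gibbs_avg1 K N B lam t u \<omega> f) \<in> borel_measurable (data_space K N)"
  unfolding gibbs_avg1_def partition_fn_def gibbs_weight_def by measurable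

lemma borel_measurable_gibbs_avg2[measurable]:
  "(\<lambda>\<omega>. gibbs_avg2 K N B lam t u \<omega> f) \<in> borel_measurable (data_space K N)"
  unfolding gibbs_avg2_def partition_fn_def gibbs_weight_def by measurable

lemma abs_gibbs_avg1_le: "\<bar>gibbs_avg1 K N B lam t u \<omega> f\<bar> \<le> (\<Sum>x\<in>spins K. \<bar>f x\<bar>)"
proof -
  let ?w = "gibbs_weight K N B lam t u \<omega>" and ?Z = "partition_fn K N B lam t u \<omega>"
  have "\<bar>\<Sum>x\<in>spins K. ?w x * f x\<bar> \<le> (\<Sum>x\<in>spins K. \<bar>?w x * f x\<bar>)" by (rule sum_abs)
  also have "\<dots> \<le> (\<Sum>x\<in>spins K. ?Z * \<bar>f x\<bar>)"
    by (intro sum_mono) (auto simp: abs_mult gibbs_weight_pos less_imp_le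
        intro!: mult_right_mono gibbs_weight_le_partition_fn)
  finally have "\<bar>\<Sum>x\<in>spins K. ?w x * f x\<bar> \<le> ?Z * (\<Sum>x\<in>spins K. \<bar>f x\<bar>)"
    by (simp add: sum_distrib_left)
  then show ?thesis
    unfolding gibbs_avg1_def using partition_fn_pos[of K N B lam t u \<omega>]
    by (simp add: abs_div pos_divide_le_eq mult.commute)
qed

lemma abs_gibbs_avg2_le: "\<bar>gibbs_avg2 K N B lam t u \<omega> f\<bar> \<le> (\<Sum>x\<in>spins K. \<Sum>y\<in>spins K. \<bar>f x y\<bar>)"
proof -
  let ?w = "gibbs_weight K N B lam t u \<omega>" and ?Z = "partition_fn K N B lam t u \<omega>"
  have Z: "0 < ?Z" by (rule partition_fn_pos)
  have w2: "?w x * ?w y \<le> ?Z * ?Z" if "x \<in> spins K" "y \<in> spins K" for x y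
    using gibbs_weight_le_partition_fn[OF that(1)] gibbs_weight_le_partition_fn[OF that(2)] Z
    by (intro mult_mono) (auto simp: gibbs_weight_pos less_imp_le)
  have "\<bar>\<Sum>x\<in>spins K. \<Sum>y\<in>spins K. ?w x * ?w y * f x y\<bar> \<le> (\<Sum>x\<in>spins K. \<Sum>y\<in>spins K. \<bar>?w x * ?w y * f x y\<bar>)"
    by (rule order_trans[OF sum_abs sum_mono[OF sum_abs]])
  also have "\<dots> \<le> (\<Sum>x\<in>spins K. \<Sum>y\<in>spins K. (?Z * ?Z) * \<bar>f x y\<bar>)"
    by (intro sum_mono) (auto simp: abs_mult gibbs_weight_pos less_imp_le intro!: mult_right_mono w2)
  finally have "\<bar>\<Sum>x\<in>spins K. \<Sum>y\<in>spins K. ?w x * ?w y * f x y\<bar>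
      \<le> (?Z * ?Z) * (\<Sum>x\<in>spins K. \<Sum>y\<in>spins K. \<bar>f x y\<bar>)"
    by (simp add: sum_distrib_left)
  then show ?thesis
    unfolding gibbs_avg2_def using Z by (simp add: abs_div pos_divide_le_eq mult.commute power2_eq_square)
qed

text \<open>
  Both sides equal \<open>\<Sum>\<^sub>x\<^sub>,\<^sub>y w(x) w(y) g(xy) / (w(1) Z)\<close>, using \<open>\<rho>\<^sub>\<tau> = w(\<tau>)/w(1)\<close> and
  \<open>\<Sum>\<^sub>\<tau> w(\<tau>) = Z\<close>.
\<close>
lemma sum_gauge_density_gibbs_avg1_eq_gibbs_avg2:
  assumes u: "0 \<le> u"
  shows "(\<Sum>\<tau>\<in>spins K. model_gauge_density K N B lam t u \<tau> \<omega> * gibbs_avg1 K N B lam t u \<omega> (\<lambda>x. g (spin_mult K x \<tau>)))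
       = (\<Sum>\<tau>\<in>spins K. model_gauge_density K N B lam t u \<tau> \<omega> * gibbs_avg2 K N B lam t u \<omega> (\<lambda>x y. g (spin_mult K x y)))"
proof -
  let ?w = "gibbs_weight K N B lam t u \<omega>" and ?Z = "partition_fn K N B lam t u \<omega>"
  define w1 where "w1 = ?w (\<lambda>_. 1)"
  have w1: "0 < w1" by (simp add: w1_def gibbs_weight_pos)
  have Z: "0 < ?Z" by (rule partition_fn_pos)
  have \<rho>: "model_gauge_density K N B lam t u \<tau> \<omega> = ?w \<tau> / w1" if "\<tau> \<in> spins K" for \<tau>
    using model_gauge_density_eq[OF that u] by (simp add: w1_def gibbs_weight_def exp_diff)
  define S where "S = (\<Sum>x\<in>spins K. \<Sum>y\<in>spins K. ?w x * ?w y * g (spin_mult K x y))"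
  have "(\<Sum>\<tau>\<in>spins K. model_gauge_density K N B lam t u \<tau> \<omega> * gibbs_avg1 K N B lam t u \<omega> (\<lambda>x. g (spin_mult K x \<tau>)))
      = (\<Sum>\<tau>\<in>spins K. (\<Sum>x\<in>spins K. ?w x * ?w \<tau> * g (spin_mult K x \<tau>)) / (w1 * ?Z))"
    by (intro sum.cong refl) (simp add: \<rho> gibbs_avg1_def sum_distrib_left sum_divide_distrib algebra_simps)
  also have "\<dots> = S / (w1 * ?Z)"
    unfolding S_def sum_divide_distrib[symmetric] by (subst sum.swap) simp
  also have "\<dots> = (\<Sum>\<tau>\<in>spins K. ?w \<tau>) / w1 * (S / ?Z\<^sup>2)"
    using Z w1 unfolding partition_fn_def[symmetric] by (simp add: power2_eq_square field_simps)
  also have "\<dots> = (\<Sum>\<tau>\<in>spins K. model_gauge_density K N B lam t u \<tau> \<omega> * gibbs_avg2 K N B lam t u \<omega> (\<lambda>x y. g (spin_mult K x y)))"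
    by (simp add: \<rho> gibbs_avg2_def S_def sum_distrib_right sum_divide_distrib)
  finally show ?thesis .
qed

lemma integral_gibbs_avg1_eq_gauge_density:
  assumes \<tau>: "\<tau> \<in> spins K" and u: "0 \<le> u"
  shows "(\<integral>\<omega>. gibbs_avg1 K N B lam t u \<omega> g \<partial>data_space K N)
       = (\<integral>\<omega>. model_gauge_density K N B lam t u \<tau> \<omega> * gibbs_avg1 K N B lam t u \<omega> (\<lambda>x. g (spin_mult K x \<tau>)) \<partial>data_space K N)"
proof -
  have "gibbs_avg1 K N B lam t u (model_gauge_map K N B lam t u \<tau> \<omega>) (\<lambda>x. g (spin_mult K x \<tau>))
      = gibbs_avg1 K N B lam t u \<omega> g" for \<omega>
    unfolding gibbs_avg1_gauge_map[OF \<tau> u]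
    by (rule gibbs_avg1_cong) (simp add: spin_mult_cancel_right[OF \<tau>])
  then show ?thesis
    using integral_gauge_map[of "\<lambda>\<omega>. gibbs_avg1 K N B lam t u \<omega> (\<lambda>x. g (spin_mult K x \<tau>))" K N \<tau>
        "sqrt (lam t)" "sqrt u" "sqrt (B t) / sqrt (real N)"]
    by simp
qed

lemma integral_gibbs_avg2_eq_gauge_density:
  assumes \<tau>: "\<tau> \<in> spins K" and u: "0 \<le> u"
  shows "(\<integral>\<omega>. gibbs_avg2 K N B lam t u \<omega> (\<lambda>x y. g (spin_mult K x y)) \<partial>data_space K N)
       = (\<integral>\<omega>. model_gauge_density K N B lam t u \<tau> \<omega> * gibbs_avg2 K N B lam t u \<omega> (\<lambda>x y. g (spin_mult K x y)) \<partial>data_space K N)"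
  using integral_gauge_map[of "\<lambda>\<omega>. gibbs_avg2 K N B lam t u \<omega> (\<lambda>x y. g (spin_mult K x y))" K N \<tau>
      "sqrt (lam t)" "sqrt u" "sqrt (B t) / sqrt (real N)"]
  by (simp add: gibbs_avg2_gauge_map[OF \<tau> u] spin_mult_gauge[OF \<tau>])

theorem nishimori_identity:
  assumes u: "0 \<le> u"
  shows "(\<integral>\<omega>. gibbs_avg1 K N B lam t u \<omega> g \<partial>data_space K N)
       = (\<integral>\<omega>. gibbs_avg2 K N B lam t u \<omega> (\<lambda>x y. g (spin_mult K x y)) \<partial>data_space K N)"
proof -
  let ?P = "data_space K N" and ?\<rho> = "model_gauge_density K N B lam t u"
  let ?A1 = "\<lambda>\<tau> \<omega>. gibbs_avg1 K N B lam t u \<omega> (\<lambda>x. g (spin_mult K x \<tau>))"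
  let ?A2 = "\<lambda>\<omega>. gibbs_avg2 K N B lam t u \<omega> (\<lambda>x y. g (spin_mult K x y))"
  have int1: "integrable ?P (\<lambda>\<omega>. ?\<rho> \<tau> \<omega> * ?A1 \<tau> \<omega>)" for \<tau>
    by (rule integrable_gauge_density_mult[OF _ abs_gibbs_avg1_le]) simp
  have int2: "integrable ?P (\<lambda>\<omega>. ?\<rho> \<tau> \<omega> * ?A2 \<omega>)" for \<tau>
    by (rule integrable_gauge_density_mult[OF _ abs_gibbs_avg2_le]) simp
  have "real (card (spins K)) * (\<integral>\<omega>. gibbs_avg1 K N B lam t u \<omega> g \<partial>?P)
      = (\<Sum>\<tau>\<in>spins K. \<integral>\<omega>. ?\<rho> \<tau> \<omega> * ?A1 \<tau> \<omega> \<partial>?P)"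
    by (simp add: integral_gibbs_avg1_eq_gauge_density[OF _ u] flip: sum_constant)
  also have "\<dots> = (\<integral>\<omega>. (\<Sum>\<tau>\<in>spins K. ?\<rho> \<tau> \<omega> * ?A2 \<omega>) \<partial>?P)"
    using int1 by (simp add: sum_gauge_density_gibbs_avg1_eq_gibbs_avg2[OF u] flip: Bochner_Integration.integral_sum)
  also have "\<dots> = real (card (spins K)) * (\<integral>\<omega>. ?A2 \<omega> \<partial>?P)"
    using int2 by (simp add: Bochner_Integration.integral_sum integral_gibbs_avg2_eq_gauge_density[OF _ u, symmetric])
  finally show ?thesis
    using ones_in_spins[of K] by (auto simp: card_gt_0_iff)
qed

theorem lemma1:
  fixes K N :: nat and B lam :: "real \<Rightarrow> real" and t u :: real
  assumes "0 < K" and "0 < N"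
    and "\<forall>s\<in>{0..1}. 0 \<le> B s" and "\<forall>s\<in>{0..1}. 0 \<le> lam s"
    and "t \<in> {0..1}" and "0 \<le> u"
  shows "(\<forall>a::real.
            (\<integral>\<omega>. gibbs_avg1 K N B lam t u \<omega> (\<lambda>x. if magn K x = a then 1 else 0) \<partial>data_space K N)
          = (\<integral>\<omega>. gibbs_avg2 K N B lam t u \<omega> (\<lambda>x1 x2. if overlap K x1 x2 = a then 1 else 0) \<partial>data_space K N))
       \<and> (\<integral>\<omega>. gibbs_avg1 K N B lam t u \<omega> (magn K) \<partial>data_space K N)
          = (\<integral>\<omega>. gibbs_avg2 K N B lam t u \<omega> (overlap K) \<partial>data_space K N)"
  \<comment> \<open>of the hypotheses only \<open>0 \<le> u\<close> is needed, so that \<open>\<surd>u\<^sup>2 = u\<close>\<close>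
  by (simp add: nishimori_identity[OF \<open>0 \<le> u\<close>] magn_spin_mult)

end
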